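(* Let $T=(V,E)$ be a tree with $\mathrm{pthin}(T)=2$, and let $\sigma$ be an ordering of $V$ and $S=\{V^0,V^1\}$ a partition of $V$ into two classes that are strongly consistent. Let $v\in V^0$ and let $w_1,w_2,w_3\in N(v)\cap V^1$ with $w_1<w_2<w_3$. Then $w_2$ has degree $1$ in $T$.
   Context: For a graph $G=(V,E)$, a linear ordering $<$ of $V$ and a partition of $V$ into classes are called strongly consistent if for every triple $r<s<t$ of vertices with $rt\in E$: if $r$ and $s$ belong to the same class then $st\in E$, and if $s$ and $t$ belong to the same class then $rs\in E$. The proper thinness $\mathrm{pthin}(G)$ is the minimum $k$ such that some ordering and some partition into $k$ classes are strongly consistent. $N(v)$ is the set of neighbors of $v$. *)

theory Defs
  imports Main "HOL-Library.Disjoint_Sets"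
begin

definition sgraph :: "'a set \<Rightarrow> ('a \<Rightarrow> 'a \<Rightarrow> bool) \<Rightarrow> bool" where
  "sgraph V E \<longleftrightarrow> finite V \<and> (\<forall>x y. E x y \<longrightarrow> x \<in> V \<and> y \<in> V)
     \<and> (\<forall>x y. E x y \<longrightarrow> E y x) \<and> (\<forall>x. \<not> E x x)"

definition is_walk :: "'a set \<Rightarrow> ('a \<Rightarrow> 'a \<Rightarrow> bool) \<Rightarrow> 'a list \<Rightarrow> bool" where
  "is_walk V E xs \<longleftrightarrow> xs \<noteq> [] \<and> set xs \<subseteq> V \<and>
     (\<forall>i. Suc i < length xs \<longrightarrow> E (xs ! i) (xs ! Suc i))"

definition connected_graph :: "'a set \<Rightarrow> ('a \<Rightarrow> 'a \<Rightarrow> bool) \<Rightarrow> bool" where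
  "connected_graph V E \<longleftrightarrow>
     (\<forall>x\<in>V. \<forall>y\<in>V. \<exists>xs. is_walk V E xs \<and> hd xs = x \<and> last xs = y)"

definition is_cycle :: "'a set \<Rightarrow> ('a \<Rightarrow> 'a \<Rightarrow> bool) \<Rightarrow> 'a list \<Rightarrow> bool" where
  "is_cycle V E xs \<longleftrightarrow> is_walk V E xs \<and> distinct xs \<and> length xs \<ge> 3 \<and> E (last xs) (hd xs)"

definition is_tree :: "'a set \<Rightarrow> ('a \<Rightarrow> 'a \<Rightarrow> bool) \<Rightarrow> bool" where
  "is_tree V E \<longleftrightarrow> sgraph V E \<and> V \<noteq> {} \<and> connected_graph V E \<and> (\<nexists>xs. is_cycle V E xs)"

definition neighbors :: "'a set \<Rightarrow> ('a \<Rightarrow> 'a \<Rightarrow> bool) \<Rightarrow> 'a \<Rightarrow> 'a set" where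
  "neighbors V E v = {u \<in> V. E v u}"

definition degree :: "'a set \<Rightarrow> ('a \<Rightarrow> 'a \<Rightarrow> bool) \<Rightarrow> 'a \<Rightarrow> nat" where
  "degree V E v = card (neighbors V E v)"

(* a linear ordering of V, given as a strict total order relation on V: (x,y) \<in> r means x < y *)
definition linear_ordering :: "'a set \<Rightarrow> ('a \<times> 'a) set \<Rightarrow> bool" where
  "linear_ordering V r \<longleftrightarrow> strict_linear_order_on V r \<and> r \<subseteq> V \<times> V"

definition same_class :: "'a set set \<Rightarrow> 'a \<Rightarrow> 'a \<Rightarrow> bool" where
  "same_class P x y \<longleftrightarrow> (\<exists>B\<in>P. x \<in> B \<and> y \<in> B)"

definition strongly_consistent ::
  "'a set \<Rightarrow> ('a \<Rightarrow> 'a \<Rightarrow> bool) \<Rightarrow> ('a \<times> 'a) set \<Rightarrow> 'a set set \<Rightarrow> bool" where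
  "strongly_consistent V E r P \<longleftrightarrow>
     (\<forall>x\<in>V. \<forall>s\<in>V. \<forall>t\<in>V. (x, s) \<in> r \<and> (s, t) \<in> r \<and> E x t \<longrightarrow>
        (same_class P x s \<longrightarrow> E s t) \<and> (same_class P s t \<longrightarrow> E x s))"

definition pthin :: "'a set \<Rightarrow> ('a \<Rightarrow> 'a \<Rightarrow> bool) \<Rightarrow> nat" where
  "pthin V E = (LEAST k. \<exists>r P. linear_ordering V r \<and> partition_on V P \<and> card P = k
                              \<and> strongly_consistent V E r P)"

end

theory Submission
  imports Defs
begin

text \<open>
  Suppose \<open>w\<^sub>2\<close> had a neighbour \<open>u \<noteq> v\<close>. Acyclicity rules out the triangles and 4-cycles
  through \<open>v\<close>, \<open>w\<^sub>2\<close>, \<open>u\<close> and \<open>w\<^sub>1\<close> or \<open>w\<^sub>3\<close>, so \<open>u\<close> is adjacent to none of \<open>v\<close>, \<open>w\<^sub>1\<close>, \<open>w\<^sub>3\<close>.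
  Yet wherever \<open>u\<close> sits in the ordering, it lies under one of the edges \<open>u w\<^sub>2\<close> (spanning \<open>w\<^sub>1\<close>
  or \<open>w\<^sub>3\<close>, which share the class of \<open>w\<^sub>2\<close>), \<open>v w\<^sub>1\<close> or \<open>v w\<^sub>3\<close> (whose endpoints lie in
  different classes, so \<open>u\<close> shares the class of one of them), and strong consistency then
  forces one of the forbidden adjacencies.
\<close>

lemma sgraph_edge_in_vertices:
  assumes "sgraph V E" "E x y"
  shows "x \<in> V" "y \<in> V"
  using assms unfolding sgraph_def by auto

lemma sgraph_sym: "sgraph V E \<Longrightarrow> E x y \<Longrightarrow> E y x"
  unfolding sgraph_def by blast

lemma sgraph_irrefl: "sgraph V E \<Longrightarrow> \<not> E x x"
  unfolding sgraph_def by blast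

lemma acyclic_no_triangle:
  assumes "sgraph V E" "\<nexists>xs. is_cycle V E xs" "E a b" "E b c"
  shows "\<not> E c a"
proof
  assume "E c a"
  moreover have "a \<noteq> b" "b \<noteq> c" "c \<noteq> a"
    using assms(3,4) \<open>E c a\<close> sgraph_irrefl[OF assms(1)] by metis+
  ultimately have "is_cycle V E [a, b, c]"
    using assms(3,4) sgraph_edge_in_vertices[OF assms(1)]
    unfolding is_cycle_def is_walk_def by (auto simp: less_Suc_eq nth_Cons split: nat.splits)
  with assms(2) show False by blast
qed

lemma acyclic_no_square:
  assumes "sgraph V E" "\<nexists>xs. is_cycle V E xs" "E a b" "E b c" "E c d" "a \<noteq> c" "b \<noteq> d"
  shows "\<not> E d a"
proof
  assume "E d a"
  moreover have "a \<noteq> b" "b \<noteq> c" "c \<noteq> d" "d \<noteq> a"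
    using assms(3-5) \<open>E d a\<close> sgraph_irrefl[OF assms(1)] by metis+
  ultimately have "is_cycle V E [a, b, c, d]"
    using assms(3-7) sgraph_edge_in_vertices[OF assms(1)]
    unfolding is_cycle_def is_walk_def by (auto simp: less_Suc_eq nth_Cons split: nat.splits)
  with assms(2) show False by blast
qed

lemma linear_ordering_total:
  "linear_ordering V r \<Longrightarrow> x \<in> V \<Longrightarrow> y \<in> V \<Longrightarrow> x \<noteq> y \<Longrightarrow> (x, y) \<in> r \<or> (y, x) \<in> r"
  unfolding linear_ordering_def strict_linear_order_on_def total_on_def by blast

lemma linear_ordering_neq: "linear_ordering V r \<Longrightarrow> (x, y) \<in> r \<Longrightarrow> x \<noteq> y"
  unfolding linear_ordering_def strict_linear_order_on_def irrefl_def by blast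

lemma same_class_sym: "same_class P x y \<longleftrightarrow> same_class P y x"
  unfolding same_class_def by blast

lemma same_class_of_two_classes:
  "x \<in> V0 \<union> V1 \<Longrightarrow> a \<in> V0 \<Longrightarrow> b \<in> V1 \<Longrightarrow> same_class {V0, V1} x a \<or> same_class {V0, V1} x b"
  unfolding same_class_def by blast

lemma strongly_consistent_under_edge:
  assumes "sgraph V E" "linear_ordering V r" "strongly_consistent V E r P" "E a b"
    and "(a, s) \<in> r \<and> (s, b) \<in> r \<or> (b, s) \<in> r \<and> (s, a) \<in> r"
    and "same_class P s a \<or> same_class P s b"
  shows "E s a \<or> E s b"
proof -
  have oriented: "E s x \<or> E s y"
    if "E x y" "(x, s) \<in> r" "(s, y) \<in> r" "same_class P s x \<or> same_class P s y" for x y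
  proof -
    have "x \<in> V" "s \<in> V" "y \<in> V"
      using that(2,3) assms(2) unfolding linear_ordering_def by auto
    with that assms(3) have "(same_class P x s \<longrightarrow> E s y) \<and> (same_class P s y \<longrightarrow> E x s)"
      unfolding strongly_consistent_def by blast
    with that(4) show ?thesis
      using sgraph_sym[OF assms(1)] same_class_sym by metis
  qed
  from assms(5) show ?thesis
    using oriented[of a b] oriented[of b a] assms(4,6) sgraph_sym[OF assms(1)] by blast
qed

lemma strongly_consistent_middle_neighbor:
  assumes graph: "sgraph V E" "\<nexists>xs. is_cycle V E xs"
    and order: "linear_ordering V \<sigma>" "strongly_consistent V E \<sigma> {V0, V1}"
    and classes: "V0 \<union> V1 = V" "v \<in> V0" "w1 \<in> V1" "w2 \<in> V1" "w3 \<in> V1"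
    and edges: "E v w1" "E v w2" "E v w3"
    and between: "(w1, w2) \<in> \<sigma>" "(w2, w3) \<in> \<sigma>"
    and "E w2 u"
  shows "u = v"
proof (rule ccontr)
  assume "u \<noteq> v"
  have sym: "\<And>x y. E x y \<Longrightarrow> E y x" using sgraph_sym[OF graph(1)] .
  have "w1 \<noteq> w2" "w2 \<noteq> w3" using between linear_ordering_neq[OF order(1)] by auto
  have "\<not> E w1 w2" "\<not> E w2 w3"
    using acyclic_no_triangle[OF graph] edges sym by blast+
  then have "u \<noteq> w1" "u \<noteq> w3" using \<open>E w2 u\<close> sym by blast+
  have "\<not> E u v" using acyclic_no_triangle[OF graph \<open>E w2 u\<close>] edges(2) sym by blast
  have "\<not> E u w1" "\<not> E u w3"
    using acyclic_no_square[OF graph edges(1) _ sym[OF \<open>E w2 u\<close>]]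
      acyclic_no_square[OF graph edges(3) _ sym[OF \<open>E w2 u\<close>]]
      \<open>u \<noteq> v\<close> \<open>w1 \<noteq> w2\<close> \<open>w2 \<noteq> w3\<close> edges(2) sym by metis+
  have "u \<in> V" "v \<in> V" "w1 \<in> V" "w3 \<in> V"
    using sgraph_edge_in_vertices[OF graph(1)] \<open>E w2 u\<close> edges by auto
  have "same_class {V0, V1} w1 w2" "same_class {V0, V1} w3 w2"
    using classes unfolding same_class_def by auto
  have u_classes: "same_class {V0, V1} u v \<or> same_class {V0, V1} u w"
    if "w \<in> V1" for w
    using same_class_of_two_classes[OF _ classes(2) that] \<open>u \<in> V\<close> classes(1) by blast
  note under = strongly_consistent_under_edge[OF graph(1) order]
  consider "(u, w1) \<in> \<sigma>" | "(w3, u) \<in> \<sigma>" | "(w1, u) \<in> \<sigma>" "(u, w3) \<in> \<sigma>"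
    using linear_ordering_total[OF order(1)] \<open>u \<in> V\<close> \<open>w1 \<in> V\<close> \<open>w3 \<in> V\<close>
      \<open>u \<noteq> w1\<close> \<open>u \<noteq> w3\<close> by blast
  then show False
  proof cases
    case 1
    then have "E w1 u \<or> E w1 w2"
      using under[of u w2 w1] \<open>E w2 u\<close> between(1) \<open>same_class {V0, V1} w1 w2\<close> sym by blast
    then show False using \<open>\<not> E u w1\<close> \<open>\<not> E w1 w2\<close> sym by blast
  next
    case 2
    then have "E w3 w2 \<or> E w3 u"
      using under[of w2 u w3] \<open>E w2 u\<close> between(2) \<open>same_class {V0, V1} w3 w2\<close> by blast
    then show False using \<open>\<not> E u w3\<close> \<open>\<not> E w2 w3\<close> sym by blast
  next
    case 3
    consider "(v, u) \<in> \<sigma>" | "(u, v) \<in> \<sigma>"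
      using linear_ordering_total[OF order(1)] \<open>u \<in> V\<close> \<open>v \<in> V\<close> \<open>u \<noteq> v\<close> by blast
    then show False
    proof cases
      case 1
      then have "E u v \<or> E u w3"
        using under[of v w3 u] edges(3) \<open>(u, w3) \<in> \<sigma>\<close> u_classes classes(5) by blast
      then show False using \<open>\<not> E u v\<close> \<open>\<not> E u w3\<close> by blast
    next
      case 2
      then have "E u v \<or> E u w1"
        using under[of v w1 u] edges(1) \<open>(w1, u) \<in> \<sigma>\<close> u_classes classes(3) by blast
      then show False using \<open>\<not> E u v\<close> \<open>\<not> E u w1\<close> by blast
    qed
  qed
qed

theorem propositionA2:
  fixes V :: "'a set" and E :: "'a \<Rightarrow> 'a \<Rightarrow> bool" and \<sigma> :: "('a \<times> 'a) set"
    and V0 V1 :: "'a set" and v w1 w2 w3 :: 'a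
  assumes "is_tree V E"
    and "pthin V E = 2"
    and "linear_ordering V \<sigma>"
    and "partition_on V {V0, V1}" and "V0 \<noteq> V1"
    and "strongly_consistent V E \<sigma> {V0, V1}"
    and "v \<in> V0"
    and "w1 \<in> neighbors V E v \<inter> V1" and "w2 \<in> neighbors V E v \<inter> V1"
    and "w3 \<in> neighbors V E v \<inter> V1"
    and "(w1, w2) \<in> \<sigma>" and "(w2, w3) \<in> \<sigma>"
  shows "degree V E w2 = 1"
proof -
  have graph: "sgraph V E" "\<nexists>xs. is_cycle V E xs"
    using assms(1) unfolding is_tree_def by auto
  have "V0 \<union> V1 = V"
    using assms(4) unfolding partition_on_def by auto
  have "neighbors V E w2 = {v}"
  proof -
    have "v \<in> neighbors V E w2"
      using assms(9) sgraph_sym[OF graph(1)] sgraph_edge_in_vertices[OF graph(1)]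
      unfolding neighbors_def by auto
    moreover have "u = v" if "u \<in> neighbors V E w2" for u
      using strongly_consistent_middle_neighbor[OF graph assms(3,6) \<open>V0 \<union> V1 = V\<close> assms(7)
          _ _ _ _ _ _ assms(11,12)]
        assms(8-10) that unfolding neighbors_def by blast
    ultimately show ?thesis by blast
  qed
  then show ?thesis unfolding degree_def by simp
qed

end
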